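(* Let $d\ge3$. There exists a constant $c_d$ depending only on $d$ such that for any integer $n\ge1$, any $\delta>0$ and any function $f:\mathbb{Z}^d\to\mathbb{R}^+$, $$\sum_{\underline x\in\mathbb{Z}^d\setminus\underline X(f,\delta)}\ \sum_{y\in B(\underline x)}f(y)^{2^*}\le c_d\big(\delta^{2^*}n^{d+2^*}\big)^{1-2/2^*}\Big(\frac1{n^2}\|f\|_2^2+\mathcal{E}(f)\Big).$$
   Context: $2^*=2d/(d-2)$. $\Lambda(r)=\{x\in\mathbb{R}^d:-r/2<x_i\le r/2,\ 1\le i\le d\}$. For $\underline x\in\mathbb{Z}^d$, the block $B(\underline x)=(n\underline x+\Lambda(n))\cap\mathbb{Z}^d$. $\underline X(f,\delta)=\{\underline x\in\mathbb{Z}^d:\sum_{y\in B(\underline x)}f(y)^{2^*}\ge\delta^{2^*}n^{d+2^*}\}$. $\|f\|_2^2=\sum_{x\in\mathbb{Z}^d}f(x)^2$ and $\mathcal{E}(f)=\frac1{2d}\sum_{y,z\in\mathbb{Z}^d,|y-z|=1}(f(y)-f(z))^2$ (ordered pairs). *)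

theory Defs
  imports "HOL-Analysis.Analysis"
begin

text \<open>Points of Z^d are functions 'd \<Rightarrow> int for a finite index type 'd; d = CARD('d).\<close>

definition crit_exp :: "nat \<Rightarrow> real" where
  "crit_exp d = 2 * real d / (real d - 2)"

definition cube :: "real \<Rightarrow> ('d::finite \<Rightarrow> real) set" where
  "cube r = {x. \<forall>i. - r / 2 < x i \<and> x i \<le> r / 2}"

definition block :: "nat \<Rightarrow> ('d::finite \<Rightarrow> int) \<Rightarrow> ('d \<Rightarrow> int) set" where
  "block n x = {y. (\<lambda>i. real_of_int (y i) - real n * real_of_int (x i)) \<in> cube (real n)}"

definition block_mass :: "nat \<Rightarrow> (('d::finite \<Rightarrow> int) \<Rightarrow> real) \<Rightarrow> ('d \<Rightarrow> int) \<Rightarrow> real" where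
  "block_mass n f x = (\<Sum>y\<in>block n x. f y powr crit_exp CARD('d))"

definition Xset :: "nat \<Rightarrow> (('d::finite \<Rightarrow> int) \<Rightarrow> real) \<Rightarrow> real \<Rightarrow> ('d \<Rightarrow> int) set" where
  "Xset n f \<delta> = {x. block_mass n f x \<ge> \<delta> powr crit_exp CARD('d) * real n powr (real CARD('d) + crit_exp CARD('d))}"

definition lattice_nbr :: "('d::finite \<Rightarrow> int) \<Rightarrow> ('d \<Rightarrow> int) \<Rightarrow> bool" where
  "lattice_nbr y z \<longleftrightarrow> (\<Sum>i\<in>UNIV. (y i - z i)\<^sup>2) = 1"

definition l2sq :: "(('d::finite \<Rightarrow> int) \<Rightarrow> real) \<Rightarrow> ennreal" where
  "l2sq f = (\<Sum>\<^sub>\<infinity>x\<in>UNIV. ennreal ((f x)\<^sup>2))"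

definition energy :: "(('d::finite \<Rightarrow> int) \<Rightarrow> real) \<Rightarrow> ennreal" where
  "energy f = ennreal (1 / (2 * real CARD('d))) *
     (\<Sum>\<^sub>\<infinity>p\<in>{(y, z). lattice_nbr y z}. ennreal ((f (fst p) - f (snd p))\<^sup>2))"

end

theory Submission
  imports Defs
begin

text \<open>
  On a lattice box Q of side n, iterated one-dimensional averaging together with Hoelder's
  inequality (the Loomis-Whitney argument) gives the L^1 Sobolev inequality with exponent
  d/(d-1). Applied to a suitable power of f and combined with Cauchy-Schwarz it yields the
  local Sobolev inequality
    (sum_Q f^2*)^(2/2*) <= C (n^-2 sum_Q f^2 + E_Q(f)),
  where E_Q only counts edges inside Q. Outside X(f, \<delta>) a block has mass m < T with
  T = \<delta>^2* n^(d+2*), so m = m^(1-2/2*) m^(2/2*) <= T^(1-2/2*) C (...). Blocks are disjoint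
  and their internal edges are distinct, so summing over blocks is controlled by the global
  l^2 norm and energy.
\<close>

lemma holder_mean_prod_powr:
  fixes x :: "'i \<Rightarrow> 't \<Rightarrow> real"
  assumes S: "finite S" "S \<noteq> {}" and T: "finite T" "T \<noteq> {}"
    and nonneg: "\<And>i t. x i t \<ge> 0"
  shows "(\<Sum>t\<in>T. \<Prod>i\<in>S. x i t powr (1 / card S)) / card T
         \<le> (\<Prod>i\<in>S. ((\<Sum>t\<in>T. x i t) / card T) powr (1 / card S))"
proof (cases "\<exists>j\<in>S. (\<Sum>t\<in>T. x j t) = 0")
  case True
  then obtain j where "j \<in> S" "\<forall>t\<in>T. x j t = 0"
    using T nonneg by (auto simp: sum_nonneg_eq_0_iff)
  then have "(\<Sum>t\<in>T. \<Prod>i\<in>S. x i t powr (1 / card S)) = 0"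
    using S(1) by (intro sum.neutral ballI) (auto simp: prod_zero_iff intro!: bexI[of _ j])
  then show ?thesis by (simp add: prod_nonneg)
next
  case False
  define A where "A i = (\<Sum>t\<in>T. x i t) / card T" for i
  have A_pos: "A i > 0" if "i \<in> S" for i
    using False that T nonneg by (auto simp: A_def less_le sum_nonneg)
  define P where "P = (\<Prod>i\<in>S. A i powr (1 / card S))"
  have pointwise: "(\<Prod>i\<in>S. x i t powr (1 / card S)) \<le> P * (\<Sum>i\<in>S. x i t / A i / card S)" for t
  proof -
    have "(\<Prod>i\<in>S. x i t powr (1 / card S))
          = (\<Prod>i\<in>S. A i powr (1 / card S) * (x i t / A i) powr (1 / card S))"
    proof (rule prod.cong[OF refl])
      fix i assume "i \<in> S"
      then show "x i t powr (1 / card S) = A i powr (1 / card S) * (x i t / A i) powr (1 / card S)"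
        using A_pos[OF \<open>i \<in> S\<close>] nonneg[of i t] by (simp add: powr_mult[symmetric])
    qed
    also have "\<dots> = P * (\<Prod>i\<in>S. x i t / A i) powr (1 / card S)"
      unfolding P_def prod_powr_distrib prod.distrib ..
    also have "\<dots> \<le> P * (\<Sum>i\<in>S. x i t / A i / card S)"
      unfolding P_def using A_pos nonneg
      by (intro mult_left_mono arith_geom_mean S prod_nonneg) (auto intro: divide_nonneg_pos)
    finally show ?thesis .
  qed
  have "(\<Sum>t\<in>T. \<Prod>i\<in>S. x i t powr (1 / card S)) / card T
        \<le> (\<Sum>t\<in>T. P * (\<Sum>i\<in>S. x i t / A i / card S)) / card T"
    by (intro divide_right_mono sum_mono pointwise) auto
  also have "\<dots> = P * (\<Sum>i\<in>S. (\<Sum>t\<in>T. x i t) / A i / card S) / card T"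
    unfolding sum_distrib_left[symmetric] sum_divide_distrib[symmetric]
    by (subst sum.swap) (simp add: sum_divide_distrib)
  also have "\<dots> = P * (\<Sum>i\<in>S. card T / card S) / card T"
    using False T by (intro arg_cong2[where f = "(/)"] arg_cong2[where f = "(*)"] sum.cong refl) (simp add: A_def)
  also have "\<dots> = P"
    using S T by simp
  finally show ?thesis unfolding P_def A_def .
qed

lemma powr_diff_le_tangent:
  fixes a b \<gamma> :: real
  assumes b: "0 \<le> b" and ba: "b \<le> a" and \<gamma>: "1 \<le> \<gamma>"
  shows "a powr \<gamma> - b powr \<gamma> \<le> \<gamma> * a powr (\<gamma> - 1) * (a - b)"
proof (cases "b = 0")
  case True
  have "a powr \<gamma> = 1 * (a powr (\<gamma> - 1) * a)"
    using powr_mult_base[of a "\<gamma> - 1"] b ba by (simp add: mult.commute)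
  also have "\<dots> \<le> \<gamma> * (a powr (\<gamma> - 1) * a)"
    using \<gamma> b ba by (intro mult_right_mono) auto
  finally show ?thesis
    using True by (simp add: mult.assoc)
next
  case False
  then have "a > 0" "b > 0"
    using b ba by auto
  then have "((\<lambda>x. x powr \<gamma>) has_field_derivative \<gamma> * a powr (\<gamma> - 1)) (at a within {0<..})"
    by (auto intro!: derivative_eq_intros)
  then have "b powr \<gamma> - a powr \<gamma> \<ge> \<gamma> * a powr (\<gamma> - 1) * (b - a)"
    using \<open>a > 0\<close> \<open>b > 0\<close>
    by (intro convex_on_imp_above_tangent[OF powr_convex[OF \<gamma>]]) (auto simp: interior_open)
  then show ?thesis
    by (simp add: algebra_simps)
qed

lemma abs_powr_diff_le:
  fixes a b \<gamma> :: real
  assumes "0 \<le> a" "0 \<le> b" "1 \<le> \<gamma>"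
  shows "\<bar>a powr \<gamma> - b powr \<gamma>\<bar> \<le> \<gamma> * \<bar>a - b\<bar> * (a powr (\<gamma> - 1) + b powr (\<gamma> - 1))"
proof -
  have *: "\<bar>x powr \<gamma> - y powr \<gamma>\<bar> \<le> \<gamma> * \<bar>x - y\<bar> * (x powr (\<gamma> - 1) + y powr (\<gamma> - 1))"
    if "0 \<le> y" "y \<le> x" for x y
  proof -
    have "\<bar>x powr \<gamma> - y powr \<gamma>\<bar> \<le> \<gamma> * (x - y) * x powr (\<gamma> - 1)"
      using that assms(3) powr_diff_le_tangent[OF that assms(3)] by (simp add: powr_mono2 mult_ac)
    also have "\<dots> \<le> \<gamma> * (x - y) * (x powr (\<gamma> - 1) + y powr (\<gamma> - 1))"
      using that assms(3) by (intro mult_left_mono) auto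
    finally show ?thesis
      using that by simp
  qed
  show ?thesis
    using *[of b a] *[of a b] assms by (cases "b \<le> a") (simp_all add: abs_minus_commute add.commute)
qed

lemma sum_mult_le_sqrt_sum_sq:
  fixes u v :: "'i \<Rightarrow> real"
  shows "(\<Sum>i\<in>I. u i * v i) \<le> sqrt (\<Sum>i\<in>I. (u i)\<^sup>2) * sqrt (\<Sum>i\<in>I. (v i)\<^sup>2)"
proof -
  have "(\<Sum>i\<in>I. u i * v i) \<le> (\<Sum>i\<in>I. \<bar>u i\<bar> * \<bar>v i\<bar>)"
    by (intro sum_mono) (simp add: abs_mult[symmetric])
  also have "\<dots> \<le> L2_set u I * L2_set v I"
    by (rule L2_set_mult_ineq)
  finally show ?thesis
    by (simp add: L2_set_def)
qed

lemma sum_powr_le_sqrt_sum_sq: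
  fixes f :: "'a \<Rightarrow> real"
  assumes "\<And>y. f y \<ge> 0"
  shows "(\<Sum>y\<in>S. f y powr \<gamma>) \<le> sqrt (\<Sum>y\<in>S. (f y)\<^sup>2) * sqrt (\<Sum>y\<in>S. f y powr (2 * (\<gamma> - 1)))"
proof -
  have "f y powr \<gamma> = f y * f y powr (\<gamma> - 1)" "(f y powr (\<gamma> - 1))\<^sup>2 = f y powr (2 * (\<gamma> - 1))" for y
    using powr_mult_base[OF assms[of y], of "\<gamma> - 1"] by (simp_all add: power2_eq_square powr_add[symmetric])
  then show ?thesis
    using sum_mult_le_sqrt_sum_sq[of f "\<lambda>y. f y powr (\<gamma> - 1)" S] by simp
qed

lemma abs_diff_le_sum_increments:
  fixes \<phi> :: "int \<Rightarrow> real"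
  assumes "s \<in> {b<..b + int n}" "t \<in> {b<..b + int n}"
  shows "\<bar>\<phi> t - \<phi> s\<bar> \<le> (\<Sum>u\<in>{b<..b + int n}. if u < b + int n then \<bar>\<phi> (u + 1) - \<phi> u\<bar> else 0)"
proof -
  have telescope: "\<bar>\<phi> t - \<phi> s\<bar> \<le> (\<Sum>u\<in>{s..<t}. \<bar>\<phi> (u + 1) - \<phi> u\<bar>)" if "s \<le> t" for s t
    using that
  proof (induction t rule: int_ge_induct)
    case (step t)
    have "{s..<t + 1} = insert t {s..<t}"
      using step.hyps by auto
    then show ?case
      using step.IH abs_triangle_ineq[of "\<phi> (t + 1) - \<phi> t" "\<phi> t - \<phi> s"] by simp
  qed simp
  have "\<bar>\<phi> t - \<phi> s\<bar> \<le> (\<Sum>u\<in>{min s t..<max s t}. \<bar>\<phi> (u + 1) - \<phi> u\<bar>)"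
    using telescope[of s t] telescope[of t s] by (cases "s \<le> t") (simp_all add: abs_minus_commute)
  also have "\<dots> = (\<Sum>u\<in>{min s t..<max s t}. if u < b + int n then \<bar>\<phi> (u + 1) - \<phi> u\<bar> else 0)"
    using assms by (intro sum.cong) auto
  also have "\<dots> \<le> (\<Sum>u\<in>{b<..b + int n}. if u < b + int n then \<bar>\<phi> (u + 1) - \<phi> u\<bar> else 0)"
    using assms by (intro sum_mono2) auto
  finally show ?thesis .
qed

lemma square_add_le: "(x + y)\<^sup>2 \<le> 2 * x\<^sup>2 + 2 * y\<^sup>2" for x y :: real
  using sum_squares_ge_zero[of "x - y" 0] by (simp add: power2_eq_square algebra_simps)

lemma sobolev_scaling:
  fixes r M D :: real
  assumes "r > 0" "M \<ge> 0" "D > 1"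
  shows "r powr D * (r * M / r powr D) powr (D / (D - 1)) = M powr (D / (D - 1))"
proof -
  have "r * M / r powr D = M * r powr (1 - D)"
    using assms by (simp add: powr_diff)
  moreover have "(1 - D) * (D / (D - 1)) = - D"
    using assms by (simp add: field_simps)
  ultimately show ?thesis
    using assms by (simp add: powr_mult powr_powr powr_minus)
qed

lemma powr_le_sq_of_le_sqrt_mult_powr:
  fixes m S D :: real
  assumes D: "D > 2" and m: "m \<ge> 0" and S: "S \<ge> 0"
    and le: "m \<le> (sqrt m * S) powr (D / (D - 1))"
  shows "m powr ((D - 2) / D) \<le> S\<^sup>2"
proof (cases "m = 0")
  case False
  have "m powr ((D - 1) / D) \<le> ((sqrt m * S) powr (D / (D - 1))) powr ((D - 1) / D)"
    using le m D by (intro powr_mono2) auto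
  also have "\<dots> = sqrt m * S"
    using D m S by (simp add: powr_powr)
  also have "m powr ((D - 1) / D) = sqrt m * m powr ((D - 2) / (2 * D))"
  proof -
    have "(D - 1) / D = 1 / 2 + (D - 2) / (2 * D)"
      using D by (simp add: field_simps)
    then show ?thesis
      using m by (simp add: powr_add powr_half_sqrt)
  qed
  finally have "m powr ((D - 2) / (2 * D)) \<le> S"
    using False m by simp
  then have "(m powr ((D - 2) / (2 * D)))\<^sup>2 \<le> S\<^sup>2"
    by (intro power_mono) auto
  then show ?thesis
    using D by (simp add: power2_eq_square powr_add[symmetric])
qed simp

lemma le_powr_mult_powr:
  fixes m T \<theta> :: real
  assumes "0 \<le> m" "m \<le> T" "0 \<le> \<theta>" "\<theta> \<le> 1"
  shows "m \<le> T powr (1 - \<theta>) * m powr \<theta>"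
proof (cases "m = 0")
  case False
  then have "m = m powr (1 - \<theta>) * m powr \<theta>"
    using assms by (simp add: powr_add[symmetric])
  also have "\<dots> \<le> T powr (1 - \<theta>) * m powr \<theta>"
    using assms by (intro mult_right_mono powr_mono2) auto
  finally show ?thesis .
qed simp

lemma ennreal_sum_le_infsum:
  fixes g :: "'a \<Rightarrow> ennreal"
  assumes "finite U" "U \<subseteq> V"
  shows "sum g U \<le> infsum g V"
proof -
  have "sum g U = infsum g U"
    using assms by simp
  also have "\<dots> \<le> infsum g V"
    using assms by (intro infsum_mono_neutral nonneg_summable_on_complete) auto
  finally show ?thesis .
qed

section \<open>Iterated line averages on a lattice box\<close>

definition lattice_box :: "('d \<Rightarrow> int) \<Rightarrow> nat \<Rightarrow> ('d \<Rightarrow> int) set" where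
  "lattice_box a n = {y. \<forall>i. a i < y i \<and> y i \<le> a i + int n}"

definition line_avg :: "('d \<Rightarrow> int) \<Rightarrow> nat \<Rightarrow> 'd \<Rightarrow> (('d \<Rightarrow> int) \<Rightarrow> real) \<Rightarrow> ('d \<Rightarrow> int) \<Rightarrow> real" where
  "line_avg a n i h y = (\<Sum>t\<in>{a i<..a i + int n}. h (y(i := t))) / real n"

definition iter_line_avg :: "('d \<Rightarrow> int) \<Rightarrow> nat \<Rightarrow> 'd list \<Rightarrow> (('d \<Rightarrow> int) \<Rightarrow> real) \<Rightarrow> ('d \<Rightarrow> int) \<Rightarrow> real" where
  "iter_line_avg a n ks h = foldr (line_avg a n) ks h"

definition ignores_coords :: "'d set \<Rightarrow> (('d \<Rightarrow> int) \<Rightarrow> real) \<Rightarrow> bool" where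
  "ignores_coords J h \<longleftrightarrow> (\<forall>y z. (\<forall>i. i \<notin> J \<longrightarrow> y i = z i) \<longrightarrow> h y = h z)"

lemma iter_line_avg_Nil [simp]: "iter_line_avg a n [] h = h"
  by (simp add: iter_line_avg_def)

lemma iter_line_avg_Cons [simp]: "iter_line_avg a n (k # ks) h = line_avg a n k (iter_line_avg a n ks h)"
  by (simp add: iter_line_avg_def)

lemma lattice_box_PiE: "lattice_box a n = (\<Pi>\<^sub>E i\<in>UNIV. {a i<..a i + int n})"
  unfolding lattice_box_def PiE_UNIV_domain by auto

lemma finite_lattice_box: "finite (lattice_box a n)" for a :: "'d::finite \<Rightarrow> int"
  unfolding lattice_box_PiE by (intro finite_PiE) auto

lemma card_lattice_box: "card (lattice_box a n) = n ^ CARD('d)" for a :: "'d::finite \<Rightarrow> int"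
  unfolding lattice_box_PiE by (simp add: card_PiE)

lemma ignores_coords_empty: "ignores_coords {} h"
  unfolding ignores_coords_def by (metis ext empty_iff)

lemma ignores_coords_subset: "ignores_coords K h \<Longrightarrow> J \<subseteq> K \<Longrightarrow> ignores_coords J h"
  unfolding ignores_coords_def by blast

lemma ignores_coords_fun_upd: "ignores_coords {k} h \<Longrightarrow> h (y(k := t)) = h y"
  unfolding ignores_coords_def by simp

lemma ignores_coords_line_avg:
  fixes J :: "'d set"
  assumes "ignores_coords J h"
  shows "ignores_coords (insert k J) (line_avg a n k h)"
  unfolding ignores_coords_def
proof (intro allI impI)
  fix y z :: "'d \<Rightarrow> int"
  assume "\<forall>i. i \<notin> insert k J \<longrightarrow> y i = z i"
  then have "\<forall>i. i \<notin> J \<longrightarrow> (y(k := t)) i = (z(k := t)) i" for t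
    by simp
  then have "h (y(k := t)) = h (z(k := t))" for t
    using assms unfolding ignores_coords_def by blast
  then show "line_avg a n k h y = line_avg a n k h z"
    unfolding line_avg_def by simp
qed

lemma ignores_coords_iter_line_avg:
  "ignores_coords J h \<Longrightarrow> ignores_coords (J \<union> set ks) (iter_line_avg a n ks h)"
  by (induction ks) (auto dest: ignores_coords_line_avg)

lemma line_avg_ignored: "ignores_coords {k} h \<Longrightarrow> n \<ge> 1 \<Longrightarrow> line_avg a n k h y = h y"
  unfolding line_avg_def by (simp add: ignores_coords_fun_upd)

lemma line_avg_mono: "(\<And>y. h y \<le> g y) \<Longrightarrow> line_avg a n k h y \<le> line_avg a n k g y"
  unfolding line_avg_def by (intro divide_right_mono sum_mono) auto

lemma line_avg_nonneg: "(\<And>y. h y \<ge> 0) \<Longrightarrow> line_avg a n k h y \<ge> 0"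
  unfolding line_avg_def by (intro divide_nonneg_nonneg sum_nonneg) auto

lemma iter_line_avg_nonneg: "(\<And>y. h y \<ge> 0) \<Longrightarrow> iter_line_avg a n ks h y \<ge> 0"
  by (induction ks arbitrary: y) (auto intro: line_avg_nonneg)

lemma sum_line_avg:
  fixes a :: "'d::finite \<Rightarrow> int"
  assumes "n \<ge> 1"
  shows "(\<Sum>y\<in>lattice_box a n. line_avg a n i h y) = (\<Sum>y\<in>lattice_box a n. h y)"
proof -
  let ?Q = "lattice_box a n" and ?I = "{a i<..a i + int n}"
  let ?swap = "\<lambda>(y, t). (y(i := t), y i)"
  have swap: "?swap p \<in> ?Q \<times> ?I" "?swap (?swap p) = p" if "p \<in> ?Q \<times> ?I" for p
    using that unfolding lattice_box_def by (cases p; auto)+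
  have "(\<Sum>y\<in>?Q. \<Sum>t\<in>?I. h (y(i := t))) = (\<Sum>(y, t)\<in>?Q \<times> ?I. h (y(i := t)))"
    by (simp add: sum.cartesian_product)
  also have "\<dots> = (\<Sum>(y, t)\<in>?Q \<times> ?I. h y)"
    by (rule sum.reindex_bij_witness[where i = ?swap and j = ?swap]) (use swap in auto)
  also have "\<dots> = real n * (\<Sum>y\<in>?Q. h y)"
    by (simp add: sum.cartesian_product[symmetric] sum_distrib_left)
  finally show ?thesis
    using assms unfolding line_avg_def by (simp add: sum_divide_distrib[symmetric])
qed

lemma sum_iter_line_avg:
  fixes a :: "'d::finite \<Rightarrow> int"
  assumes "n \<ge> 1"
  shows "(\<Sum>y\<in>lattice_box a n. iter_line_avg a n ks h y) = (\<Sum>y\<in>lattice_box a n. h y)"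
  by (induction ks) (simp_all add: sum_line_avg[OF assms])

lemma sum_lattice_box_eq_iter_line_avg:
  fixes a :: "'d::finite \<Rightarrow> int"
  assumes "n \<ge> 1" and "set ks = UNIV"
  shows "(\<Sum>y\<in>lattice_box a n. h y) = real (n ^ CARD('d)) * iter_line_avg a n ks h z"
proof -
  have const: "iter_line_avg a n ks h y = iter_line_avg a n ks h z" for y
    using ignores_coords_iter_line_avg[OF ignores_coords_empty, of ks a n h] assms(2)
    unfolding ignores_coords_def by simp
  have "(\<Sum>y\<in>lattice_box a n. h y) = (\<Sum>y\<in>lattice_box a n. iter_line_avg a n ks h y)"
    by (rule sum_iter_line_avg[OF assms(1), symmetric])
  also have "\<dots> = (\<Sum>y\<in>lattice_box a n. iter_line_avg a n ks h z)"
    by (rule sum.cong[OF refl const])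
  also have "\<dots> = real (n ^ CARD('d)) * iter_line_avg a n ks h z"
    by (simp add: card_lattice_box)
  finally show ?thesis .
qed

lemma line_avg_prod_powr_le:
  fixes H :: "'d::finite \<Rightarrow> ('d \<Rightarrow> int) \<Rightarrow> real"
  assumes n: "n \<ge> 1" and D: "CARD('d) \<ge> 2"
    and nonneg: "\<And>i y. H i y \<ge> 0" and ignores: "ignores_coords {k} (H k)"
  shows "line_avg a n k (\<lambda>y. \<Prod>i\<in>UNIV. H i y powr (1 / (real CARD('d) - 1))) y
         \<le> (\<Prod>i\<in>UNIV. line_avg a n k (H i) y powr (1 / (real CARD('d) - 1)))"
proof -
  let ?w = "1 / (real CARD('d) - 1)" and ?I = "{a k<..a k + int n}" and ?S = "UNIV - {k}"
  have card_S: "card ?S = CARD('d) - 1"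
    by (simp add: card_Diff_singleton)
  then have w: "?w = 1 / card ?S"
    using D by (simp add: of_nat_diff)
  have "card ?S > 0"
    using card_S D by simp
  then have S: "finite ?S" "?S \<noteq> {}"
    by (auto simp only: card_gt_0_iff)
  have split: "(\<Prod>i\<in>UNIV. G i) = G k * (\<Prod>i\<in>?S. G i)" for G :: "'d \<Rightarrow> real"
    by (simp add: prod.remove[of UNIV k])
  have "line_avg a n k (\<lambda>y. \<Prod>i\<in>UNIV. H i y powr ?w) y
        = H k y powr ?w * ((\<Sum>t\<in>?I. \<Prod>i\<in>?S. H i (y(k := t)) powr (1 / card ?S)) / card ?I)"
    unfolding line_avg_def split w
    by (simp add: ignores_coords_fun_upd[OF ignores] sum_distrib_left)
  also have "\<dots> \<le> H k y powr ?w * (\<Prod>i\<in>?S. ((\<Sum>t\<in>?I. H i (y(k := t))) / card ?I) powr (1 / card ?S))"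
    using n nonneg by (intro mult_left_mono holder_mean_prod_powr S) auto
  also have "\<dots> = (\<Prod>i\<in>UNIV. line_avg a n k (H i) y powr ?w)"
    unfolding split w line_avg_ignored[OF ignores n] by (simp add: line_avg_def)
  finally show ?thesis .
qed

text \<open>The discrete Loomis-Whitney inequality: averaging coordinate by coordinate, Hoelder's
  inequality is applied to the d - 1 factors that still depend on the current coordinate.\<close>
lemma iter_line_avg_prod_powr_le:
  fixes H :: "'d::finite \<Rightarrow> ('d \<Rightarrow> int) \<Rightarrow> real"
  assumes n: "n \<ge> 1" and D: "CARD('d) \<ge> 2"
    and nonneg: "\<And>i y. H i y \<ge> 0" and ignores: "\<And>i. ignores_coords {i} (H i)"
  shows "iter_line_avg a n ks (\<lambda>y. \<Prod>i\<in>UNIV. H i y powr (1 / (real CARD('d) - 1))) y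
         \<le> (\<Prod>i\<in>UNIV. iter_line_avg a n ks (H i) y powr (1 / (real CARD('d) - 1)))"
proof (induction ks arbitrary: y)
  case Nil
  then show ?case by simp
next
  case (Cons k ks)
  let ?w = "1 / (real CARD('d) - 1)"
  have "ignores_coords ({k} \<union> set ks) (iter_line_avg a n ks (H k))"
    by (rule ignores_coords_iter_line_avg[OF ignores])
  then have ignores_k: "ignores_coords {k} (iter_line_avg a n ks (H k))"
    by (rule ignores_coords_subset) simp
  have "iter_line_avg a n (k # ks) (\<lambda>y. \<Prod>i\<in>UNIV. H i y powr ?w) y
        \<le> line_avg a n k (\<lambda>y. \<Prod>i\<in>UNIV. iter_line_avg a n ks (H i) y powr ?w) y"
    using Cons.IH by (simp add: line_avg_mono)
  also have "\<dots> \<le> (\<Prod>i\<in>UNIV. iter_line_avg a n (k # ks) (H i) y powr ?w)"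
    using line_avg_prod_powr_le[where H = "\<lambda>i. iter_line_avg a n ks (H i)",
        OF n D iter_line_avg_nonneg[OF nonneg] ignores_k]
    by simp
  finally show ?case .
qed

section \<open>The L^1 Sobolev inequality on a box\<close>

definition box_grad :: "('d \<Rightarrow> int) \<Rightarrow> nat \<Rightarrow> (('d \<Rightarrow> int) \<Rightarrow> real) \<Rightarrow> 'd \<Rightarrow> ('d \<Rightarrow> int) \<Rightarrow> real" where
  "box_grad a n g i y = (if y i < a i + int n then \<bar>g (y(i := y i + 1)) - g y\<bar> else 0)"

lemma box_grad_nonneg: "box_grad a n g i y \<ge> 0"
  by (simp add: box_grad_def)

lemma le_line_avg_box_grad:
  assumes y: "y \<in> lattice_box a n" and n: "n \<ge> 1"
  shows "g y \<le> line_avg a n i (\<lambda>z. g z + real n * box_grad a n g i z) y"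
proof -
  let ?I = "{a i<..a i + int n}"
  define \<phi> where "\<phi> t = g (y(i := t))" for t
  define E where "E = (\<Sum>u\<in>?I. if u < a i + int n then \<bar>\<phi> (u + 1) - \<phi> u\<bar> else 0)"
  have yi: "y i \<in> ?I"
    using y unfolding lattice_box_def by auto
  have "g y - E \<le> \<phi> t" if "t \<in> ?I" for t
    using abs_diff_le_sum_increments[where \<phi> = \<phi>, OF yi that] unfolding E_def \<phi>_def by simp
  then have "real n * (g y - E) \<le> (\<Sum>t\<in>?I. \<phi> t)"
    using sum_mono[of ?I "\<lambda>_. g y - E" \<phi>] by simp
  then have "g y - E \<le> (\<Sum>t\<in>?I. \<phi> t) / n"
    using n by (simp add: pos_le_divide_eq mult.commute)
  moreover have "box_grad a n g i (y(i := t)) = (if t < a i + int n then \<bar>\<phi> (t + 1) - \<phi> t\<bar> else 0)" for t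
    by (simp add: box_grad_def \<phi>_def)
  then have "line_avg a n i (\<lambda>z. g z + real n * box_grad a n g i z) y = (\<Sum>t\<in>?I. \<phi> t) / n + E"
    using n unfolding line_avg_def E_def
    by (simp add: \<phi>_def sum.distrib sum_distrib_left[symmetric] add_divide_distrib)
  ultimately show ?thesis
    by linarith
qed

lemma powr_le_prod_line_avg_box_grad:
  fixes g :: "('d::finite \<Rightarrow> int) \<Rightarrow> real"
  assumes y: "y \<in> lattice_box a n" and n: "n \<ge> 1" and D: "CARD('d) \<ge> 2" and nonneg: "\<And>y. g y \<ge> 0"
  shows "g y powr (real CARD('d) / (real CARD('d) - 1))
         \<le> (\<Prod>i\<in>UNIV. line_avg a n i (\<lambda>z. g z + real n * box_grad a n g i z) y powr (1 / (real CARD('d) - 1)))"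
proof -
  have "g y powr (real CARD('d) / (real CARD('d) - 1)) = (\<Prod>i\<in>(UNIV::'d set). g y powr (1 / (real CARD('d) - 1)))"
    using nonneg[of y] D by (cases "g y = 0") (simp_all add: powr_power)
  also have "\<dots> \<le> (\<Prod>i\<in>UNIV. line_avg a n i (\<lambda>z. g z + real n * box_grad a n g i z) y powr (1 / (real CARD('d) - 1)))"
    using le_line_avg_box_grad[OF y n] nonneg[of y] D by (intro prod_mono) (simp add: powr_mono2)
  finally show ?thesis .
qed

lemma sum_line_avg_box_grad_le:
  fixes g :: "('d::finite \<Rightarrow> int) \<Rightarrow> real"
  assumes n: "n \<ge> 1"
  shows "(\<Sum>y\<in>lattice_box a n. line_avg a n i (\<lambda>z. g z + real n * box_grad a n g i z) y)
         \<le> real n * ((\<Sum>y\<in>lattice_box a n. g y) / n + (\<Sum>i\<in>UNIV. \<Sum>y\<in>lattice_box a n. box_grad a n g i y))"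
proof -
  let ?Q = "lattice_box a n"
  have "(\<Sum>y\<in>?Q. box_grad a n g i y) \<le> (\<Sum>i\<in>UNIV. \<Sum>y\<in>?Q. box_grad a n g i y)"
    by (intro member_le_sum sum_nonneg box_grad_nonneg) auto
  moreover have "(\<Sum>y\<in>?Q. line_avg a n i (\<lambda>z. g z + real n * box_grad a n g i z) y)
      = (\<Sum>y\<in>?Q. g y) + n * (\<Sum>y\<in>?Q. box_grad a n g i y)"
    unfolding sum_line_avg[OF n] by (simp add: sum.distrib sum_distrib_left)
  ultimately show ?thesis
    using n by (simp add: distrib_left)
qed

text \<open>The discrete L^1 Sobolev (Gagliardo-Nirenberg) inequality: g is bounded by each of the
  d line averages of g + n |D_i g|, and these are combined by Loomis-Whitney.\<close>
lemma gagliardo_nirenberg_box: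
  fixes g :: "('d::finite \<Rightarrow> int) \<Rightarrow> real"
  assumes n: "n \<ge> 1" and D: "CARD('d) \<ge> 2" and nonneg: "\<And>y. g y \<ge> 0"
  shows "(\<Sum>y\<in>lattice_box a n. g y powr (real CARD('d) / (real CARD('d) - 1)))
         \<le> ((\<Sum>y\<in>lattice_box a n. g y) / n + (\<Sum>i\<in>UNIV. \<Sum>y\<in>lattice_box a n. box_grad a n g i y))
             powr (real CARD('d) / (real CARD('d) - 1))"
proof -
  let ?D = "real CARD('d)" and ?Q = "lattice_box a n"
  let ?w = "1 / (?D - 1)" and ?q = "?D / (?D - 1)"
  define M where "M = (\<Sum>y\<in>?Q. g y) / n + (\<Sum>i\<in>UNIV. \<Sum>y\<in>?Q. box_grad a n g i y)"
  define N where "N = real n powr ?D"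
  define H where "H i = line_avg a n i (\<lambda>z. g z + real n * box_grad a n g i z)" for i
  obtain ks :: "'d list" where ks: "set ks = UNIV"
    using finite_list[of "UNIV :: 'd set"] by auto
  have N: "N > 0" "real (n ^ CARD('d)) = N"
    using n by (simp_all add: N_def powr_realpow)
  have M: "M \<ge> 0"
    unfolding M_def by (intro add_nonneg_nonneg divide_nonneg_nonneg sum_nonneg nonneg box_grad_nonneg) auto
  have H_nonneg: "H i y \<ge> 0" for i y
    unfolding H_def by (intro line_avg_nonneg add_nonneg_nonneg mult_nonneg_nonneg nonneg box_grad_nonneg) simp
  have H_ignores: "ignores_coords {i} (H i)" for i
    unfolding H_def by (rule ignores_coords_line_avg[OF ignores_coords_empty])
  have sum_H: "(\<Sum>y\<in>?Q. H i y) \<le> n * M" for i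
    unfolding H_def M_def by (rule sum_line_avg_box_grad_le[OF n])
  have "g y powr ?q \<le> (\<Prod>i\<in>UNIV. H i y powr ?w)" if "y \<in> ?Q" for y
    unfolding H_def by (rule powr_le_prod_line_avg_box_grad[OF that n D nonneg])
  then have "(\<Sum>y\<in>?Q. g y powr ?q) \<le> (\<Sum>y\<in>?Q. \<Prod>i\<in>UNIV. H i y powr ?w)"
    by (rule sum_mono)
  also have "\<dots> = N * iter_line_avg a n ks (\<lambda>y. \<Prod>i\<in>UNIV. H i y powr ?w) a"
    using sum_lattice_box_eq_iter_line_avg[OF n ks] N by simp
  also have "\<dots> \<le> N * (\<Prod>i\<in>UNIV. iter_line_avg a n ks (H i) a powr ?w)"
    using N by (intro mult_left_mono iter_line_avg_prod_powr_le[OF n D H_nonneg H_ignores]) auto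
  also have "\<dots> = N * (\<Prod>i\<in>UNIV. ((\<Sum>y\<in>?Q. H i y) / N) powr ?w)"
    using sum_lattice_box_eq_iter_line_avg[OF n ks, of "H _" a a] N by simp
  also have "\<dots> \<le> N * (\<Prod>i\<in>(UNIV::'d set). (n * M / N) powr ?w)"
    using N sum_H D by (intro mult_left_mono prod_mono conjI powr_mono2 divide_right_mono
        divide_nonneg_pos sum_nonneg H_nonneg) auto
  also have "\<dots> = N * (n * M / N) powr ?q"
    using N n D by (cases "M = 0") (simp_all add: powr_power)
  also have "\<dots> = M powr ?q"
    unfolding N_def using n M D by (intro sobolev_scaling) auto
  finally show ?thesis
    unfolding M_def .
qed

section \<open>The L^2 Sobolev inequality on a box\<close>

lemma sum_lattice_box_shift_le:
  fixes F :: "('d::finite \<Rightarrow> int) \<Rightarrow> real"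
  assumes nonneg: "\<And>y. F y \<ge> 0"
  shows "(\<Sum>y\<in>lattice_box a n. if y i < a i + int n then F (y(i := y i + 1)) else 0)
         \<le> (\<Sum>y\<in>lattice_box a n. F y)"
proof -
  let ?Q = "lattice_box a n" and ?s = "\<lambda>y. y(i := y i + 1)"
  let ?A = "{y \<in> ?Q. y i < a i + int n}"
  have inj: "inj_on ?s ?A"
  proof (rule inj_onI)
    fix x y :: "'d \<Rightarrow> int"
    assume "x(i := x i + 1) = y(i := y i + 1)"
    then have "x j = y j" for j
      by (cases "j = i") (auto dest: fun_cong[where x = j])
    then show "x = y" ..
  qed
  have image: "?s ` ?A \<subseteq> ?Q"
    unfolding lattice_box_def by (force simp: less_imp_le)
  have "(\<Sum>y\<in>?A. F (?s y)) = (\<Sum>z\<in>?s ` ?A. F z)"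
    by (simp add: sum.reindex[OF inj])
  also have "\<dots> \<le> (\<Sum>y\<in>?Q. F y)"
    using nonneg by (intro sum_mono2[OF finite_lattice_box image]) auto
  finally show ?thesis
    by (simp add: sum.inter_filter[OF finite_lattice_box])
qed

lemma sum_sq_shift_add_le:
  fixes u :: "('d::finite \<Rightarrow> int) \<Rightarrow> real"
  shows "(\<Sum>i\<in>UNIV. \<Sum>y\<in>lattice_box a n. if y i < a i + int n then (u (y(i := y i + 1)) + u y)\<^sup>2 else 0)
         \<le> 4 * real CARD('d) * (\<Sum>y\<in>lattice_box a n. (u y)\<^sup>2)"
proof -
  let ?Q = "lattice_box a n"
  have "(\<Sum>y\<in>?Q. if y i < a i + int n then (u (y(i := y i + 1)) + u y)\<^sup>2 else 0)
        \<le> 2 * (\<Sum>y\<in>?Q. if y i < a i + int n then (u (y(i := y i + 1)))\<^sup>2 else 0) + 2 * (\<Sum>y\<in>?Q. (u y)\<^sup>2)" for i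
    using square_add_le by (simp add: sum_distrib_left sum.distrib[symmetric] sum_mono)
  also have "\<dots> i \<le> 4 * (\<Sum>y\<in>?Q. (u y)\<^sup>2)" for i
    using sum_lattice_box_shift_le[where F = "\<lambda>y. (u y)\<^sup>2" and a = a and n = n and i = i] by simp
  finally have "(\<Sum>i\<in>UNIV. \<Sum>y\<in>?Q. if y i < a i + int n then (u (y(i := y i + 1)) + u y)\<^sup>2 else 0)
      \<le> (\<Sum>i\<in>(UNIV :: 'd set). 4 * (\<Sum>y\<in>?Q. (u y)\<^sup>2))"
    by (rule sum_mono)
  then show ?thesis
    by simp
qed

definition box_energy :: "('d::finite \<Rightarrow> int) \<Rightarrow> nat \<Rightarrow> (('d \<Rightarrow> int) \<Rightarrow> real) \<Rightarrow> real" where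
  "box_energy a n f = (\<Sum>i\<in>UNIV. \<Sum>y\<in>lattice_box a n. (box_grad a n f i y)\<^sup>2)"

lemma box_energy_nonneg: "box_energy a n f \<ge> 0"
  unfolding box_energy_def by (intro sum_nonneg) simp

lemma box_grad_powr_le:
  assumes "\<And>y. f y \<ge> 0" "1 \<le> \<gamma>"
  shows "box_grad a n (\<lambda>y. f y powr \<gamma>) i y
         \<le> \<gamma> * (box_grad a n f i y *
             (if y i < a i + int n then f (y(i := y i + 1)) powr (\<gamma> - 1) + f y powr (\<gamma> - 1) else 0))"
  unfolding box_grad_def using abs_powr_diff_le[OF assms(1,1,2)] by (simp add: mult.assoc)

lemma sum_box_grad_powr_le:
  fixes f :: "('d::finite \<Rightarrow> int) \<Rightarrow> real"
  assumes nonneg: "\<And>y. f y \<ge> 0" and \<gamma>: "1 \<le> \<gamma>"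
  shows "(\<Sum>i\<in>UNIV. \<Sum>y\<in>lattice_box a n. box_grad a n (\<lambda>y. f y powr \<gamma>) i y)
         \<le> \<gamma> * sqrt (box_energy a n f)
             * sqrt (4 * real CARD('d) * (\<Sum>y\<in>lattice_box a n. f y powr (2 * (\<gamma> - 1))))"
proof -
  let ?Q = "lattice_box a n"
  define v where "v i y = (if y i < a i + int n then f (y(i := y i + 1)) powr (\<gamma> - 1) + f y powr (\<gamma> - 1) else 0)"
    for i y
  have "box_grad a n (\<lambda>y. f y powr \<gamma>) i y \<le> \<gamma> * (box_grad a n f i y * v i y)" for i y
    unfolding v_def by (rule box_grad_powr_le[OF nonneg \<gamma>])
  then have "(\<Sum>i\<in>UNIV. \<Sum>y\<in>?Q. box_grad a n (\<lambda>y. f y powr \<gamma>) i y)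
        \<le> (\<Sum>i\<in>UNIV. \<Sum>y\<in>?Q. \<gamma> * (box_grad a n f i y * v i y))"
    by (intro sum_mono)
  also have "\<dots> = \<gamma> * (\<Sum>(i, y)\<in>UNIV \<times> ?Q. box_grad a n f i y * v i y)"
    by (simp add: sum.cartesian_product sum_distrib_left case_prod_unfold)
  also have "\<dots> \<le> \<gamma> * (sqrt (\<Sum>(i, y)\<in>UNIV \<times> ?Q. (box_grad a n f i y)\<^sup>2) * sqrt (\<Sum>(i, y)\<in>UNIV \<times> ?Q. (v i y)\<^sup>2))"
    using \<gamma> sum_mult_le_sqrt_sum_sq[of "\<lambda>(i, y). box_grad a n f i y" "\<lambda>(i, y). v i y" "UNIV \<times> ?Q"]
    by (intro mult_left_mono) (auto simp: case_prod_beta)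
  also have "(\<Sum>(i, y)\<in>UNIV \<times> ?Q. (box_grad a n f i y)\<^sup>2) = box_energy a n f"
    by (simp add: box_energy_def sum.cartesian_product)
  also have "(\<Sum>(i, y)\<in>UNIV \<times> ?Q. (v i y)\<^sup>2) \<le> 4 * real CARD('d) * (\<Sum>y\<in>?Q. f y powr (2 * (\<gamma> - 1)))"
  proof -
    have "(f y powr (\<gamma> - 1))\<^sup>2 = f y powr (2 * (\<gamma> - 1))" for y
      by (simp add: power2_eq_square powr_add[symmetric])
    then show ?thesis
      using sum_sq_shift_add_le[of a n "\<lambda>y. f y powr (\<gamma> - 1)"]
      by (simp add: sum.cartesian_product[symmetric] v_def if_distrib[of "\<lambda>x. x\<^sup>2"] cong: if_cong)
  qed
  finally show ?thesis
    using \<gamma> box_energy_nonneg[of a n f] by (simp add: mult_left_mono mult.assoc)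
qed

definition sobolev_const :: "nat \<Rightarrow> real" where
  "sobolev_const d = 2 + 8 * real d * (2 * (real d - 1) / (real d - 2))\<^sup>2"

lemma sobolev_const_bound:
  fixes L E :: real
  assumes "d \<ge> 3" "L \<ge> 0" "E \<ge> 0"
  shows "(sqrt L / n + 2 * (real d - 1) / (real d - 2) * sqrt (4 * real d) * sqrt E)\<^sup>2
         \<le> sobolev_const d * (L / (real n)\<^sup>2 + E)"
proof -
  let ?\<gamma> = "2 * (real d - 1) / (real d - 2)"
  have "(sqrt L / n + ?\<gamma> * sqrt (4 * real d) * sqrt E)\<^sup>2
        \<le> 2 * (sqrt L / n)\<^sup>2 + 2 * (?\<gamma> * sqrt (4 * real d) * sqrt E)\<^sup>2"
    by (rule square_add_le)
  also have "\<dots> = 2 * (L / (real n)\<^sup>2) + 8 * real d * ?\<gamma>\<^sup>2 * E"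
    using assms by (simp add: power_divide power_mult_distrib)
  also have "\<dots> \<le> sobolev_const d * (L / (real n)\<^sup>2 + E)"
    using assms by (simp add: sobolev_const_def distrib_left mult_right_mono add_mono mult_ac)
  finally show ?thesis .
qed

text \<open>Apply the L^1 inequality to f^\<gamma> with \<gamma> = 2(d-1)/(d-2), chosen so that
  (f^\<gamma>)^(d/(d-1)) = (f^(\<gamma>-1))^2 = f^2*; Cauchy-Schwarz then bounds both terms by
  (sum f^2*)^(1/2) times the L^2 data.\<close>
lemma sobolev_box:
  fixes f :: "('d::finite \<Rightarrow> int) \<Rightarrow> real"
  assumes n: "n \<ge> 1" and d: "CARD('d) \<ge> 3" and nonneg: "\<And>y. f y \<ge> 0"
  shows "(\<Sum>y\<in>lattice_box a n. f y powr crit_exp CARD('d)) powr (2 / crit_exp CARD('d))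
         \<le> sobolev_const CARD('d) * ((\<Sum>y\<in>lattice_box a n. (f y)\<^sup>2) / (real n)\<^sup>2 + box_energy a n f)"
proof -
  let ?D = "real CARD('d)" and ?Q = "lattice_box a n" and ?p = "crit_exp CARD('d)"
  define \<gamma> where "\<gamma> = 2 * (?D - 1) / (?D - 2)"
  define m where "m = (\<Sum>y\<in>?Q. f y powr ?p)"
  define L where "L = (\<Sum>y\<in>?Q. (f y)\<^sup>2)"
  define E where "E = box_energy a n f"
  define S where "S = sqrt L / n + \<gamma> * sqrt (4 * ?D) * sqrt E"
  have D: "?D \<ge> 3"
    using d by simp
  have \<gamma>: "\<gamma> \<ge> 1" "2 * (\<gamma> - 1) = ?p" "\<gamma> * (?D / (?D - 1)) = ?p" "2 / ?p = (?D - 2) / ?D"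
    using D by (auto simp: \<gamma>_def crit_exp_def divide_simps)
  have nonneg': "m \<ge> 0" "L \<ge> 0" "E \<ge> 0" "S \<ge> 0"
    using \<gamma> by (auto simp: m_def L_def E_def S_def box_energy_nonneg
        intro!: sum_nonneg add_nonneg_nonneg mult_nonneg_nonneg divide_nonneg_nonneg)
  have "m = (\<Sum>y\<in>?Q. (f y powr \<gamma>) powr (?D / (?D - 1)))"
    by (simp only: m_def powr_powr \<gamma>(3))
  also have "\<dots> \<le> ((\<Sum>y\<in>?Q. f y powr \<gamma>) / n + (\<Sum>i\<in>UNIV. \<Sum>y\<in>?Q. box_grad a n (\<lambda>y. f y powr \<gamma>) i y))
                   powr (?D / (?D - 1))"
    using d n by (intro gagliardo_nirenberg_box) auto
  also have "\<dots> \<le> (sqrt m * S) powr (?D / (?D - 1))"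
  proof (intro powr_mono2)
    have "(\<Sum>y\<in>?Q. f y powr \<gamma>) \<le> sqrt L * sqrt m"
      using sum_powr_le_sqrt_sum_sq[where f = f and S = ?Q and \<gamma> = \<gamma>, OF nonneg]
      unfolding \<gamma>(2) L_def m_def .
    moreover have "(\<Sum>i\<in>UNIV. \<Sum>y\<in>?Q. box_grad a n (\<lambda>y. f y powr \<gamma>) i y) \<le> \<gamma> * sqrt E * (sqrt (4 * ?D) * sqrt m)"
      using sum_box_grad_powr_le[where f = f and a = a and n = n, OF nonneg \<gamma>(1)]
      unfolding \<gamma>(2) by (simp add: E_def m_def real_sqrt_mult)
    ultimately have "(\<Sum>y\<in>?Q. f y powr \<gamma>) / n + (\<Sum>i\<in>UNIV. \<Sum>y\<in>?Q. box_grad a n (\<lambda>y. f y powr \<gamma>) i y)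
        \<le> sqrt L * sqrt m / n + \<gamma> * sqrt E * (sqrt (4 * ?D) * sqrt m)"
      by (intro add_mono divide_right_mono) auto
    then show "(\<Sum>y\<in>?Q. f y powr \<gamma>) / n + (\<Sum>i\<in>UNIV. \<Sum>y\<in>?Q. box_grad a n (\<lambda>y. f y powr \<gamma>) i y) \<le> sqrt m * S"
      by (simp add: S_def distrib_left mult_ac)
  qed (use D in \<open>auto intro!: add_nonneg_nonneg divide_nonneg_nonneg sum_nonneg box_grad_nonneg\<close>)
  finally have "m powr (2 / ?p) \<le> S\<^sup>2"
    using powr_le_sq_of_le_sqrt_mult_powr[of ?D m S] D nonneg' \<gamma>(4) by simp
  also have "S\<^sup>2 \<le> sobolev_const CARD('d) * (L / (real n)\<^sup>2 + E)"
    unfolding S_def \<gamma>_def using d nonneg' by (intro sobolev_const_bound) auto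
  finally show ?thesis
    unfolding m_def L_def E_def .
qed

section \<open>Blocks\<close>

text \<open>The integers in (-n/2, n/2] are those in (-c, n - c] with c = (n + 1) div 2, so every
  block is a lattice box of side n.\<close>
definition block_corner :: "nat \<Rightarrow> ('d \<Rightarrow> int) \<Rightarrow> ('d \<Rightarrow> int)" where
  "block_corner n x = (\<lambda>i. int n * x i - int ((n + 1) div 2))"

lemma centered_interval_int_iff:
  "(- real n / 2 < real_of_int k \<and> real_of_int k \<le> real n / 2)
   \<longleftrightarrow> (- int ((n + 1) div 2) < k \<and> k \<le> int n - int ((n + 1) div 2))"
proof -
  have "(- real n / 2 < real_of_int k \<and> real_of_int k \<le> real n / 2) \<longleftrightarrow> (- int n < 2 * k \<and> 2 * k \<le> int n)"
    by linarith
  also have "\<dots> \<longleftrightarrow> (- int ((n + 1) div 2) < k \<and> k \<le> int n - int ((n + 1) div 2))"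
    by presburger
  finally show ?thesis .
qed

lemma block_eq_lattice_box: "block n x = lattice_box (block_corner n x) n"
proof -
  have "(- real n / 2 < real_of_int (y i) - real n * real_of_int (x i) \<and>
           real_of_int (y i) - real n * real_of_int (x i) \<le> real n / 2)
        \<longleftrightarrow> (block_corner n x i < y i \<and> y i \<le> block_corner n x i + int n)" for y i
  proof -
    have diff: "real_of_int (y i) - real n * real_of_int (x i) = real_of_int (y i - int n * x i)"
      by simp
    show ?thesis
      unfolding diff centered_interval_int_iff block_corner_def by auto
  qed
  then show ?thesis
    unfolding block_def cube_def lattice_box_def mem_Collect_eq by presburger
qed

lemma finite_block: "finite (block n x)" for x :: "'d::finite \<Rightarrow> int"
  by (simp add: block_eq_lattice_box finite_lattice_box)

lemma block_disjoint:
  assumes n: "n \<ge> 1" and "y \<in> block n x" "y \<in> block n x'"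
  shows "x = x'"
proof
  fix i
  have "int n * x i < y i + int ((n + 1) div 2)" "y i + int ((n + 1) div 2) \<le> int n * x i + int n"
    "int n * x' i < y i + int ((n + 1) div 2)" "y i + int ((n + 1) div 2) \<le> int n * x' i + int n"
    using assms(2,3) by (auto simp: block_eq_lattice_box lattice_box_def block_corner_def dest!: spec[where x = i])
  then have "int n * x i < int n * (x' i + 1)" "int n * x' i < int n * (x i + 1)"
    by (simp_all add: algebra_simps)
  then show "x i = x' i"
    using n by (simp add: mult_less_cancel_left)
qed

lemma sum_blocks_eq_sum_Union:
  fixes h :: "('d::finite \<Rightarrow> int) \<Rightarrow> real"
  assumes "n \<ge> 1" "finite F"
  shows "(\<Sum>x\<in>F. \<Sum>y\<in>block n x. h y) = (\<Sum>y\<in>\<Union>(block n ` F). h y)"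
  using assms block_disjoint[OF assms(1)] by (intro sum.UNION_disjoint[symmetric]) (auto simp: finite_block)

lemma sum_block_sq_le_l2sq:
  fixes f :: "('d::finite \<Rightarrow> int) \<Rightarrow> real"
  assumes "n \<ge> 1" "finite F"
  shows "ennreal (\<Sum>x\<in>F. \<Sum>y\<in>block n x. (f y)\<^sup>2) \<le> l2sq f"
proof -
  have "ennreal (\<Sum>x\<in>F. \<Sum>y\<in>block n x. (f y)\<^sup>2) = (\<Sum>y\<in>\<Union>(block n ` F). ennreal ((f y)\<^sup>2))"
    using assms by (simp add: sum_blocks_eq_sum_Union)
  also have "\<dots> \<le> l2sq f"
    unfolding l2sq_def using assms by (intro ennreal_sum_le_infsum) (auto simp: finite_block)
  finally show ?thesis .
qed

lemma lattice_nbr_fun_upd_Suc: "lattice_nbr (y(i := y i + 1)) y"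
proof -
  have "(\<Sum>j\<in>UNIV. ((y(i := y i + 1)) j - y j)\<^sup>2) = (\<Sum>j\<in>UNIV. if j = i then 1 else 0)"
    by (intro sum.cong) auto
  then show ?thesis
    by (simp add: lattice_nbr_def)
qed

text \<open>Each nearest-neighbour pair is counted at most once, since the blocks are disjoint and
  (y, i) \<mapsto> (y + e_i, y) is injective.\<close>
lemma sum_block_energy_le_energy:
  fixes f :: "('d::finite \<Rightarrow> int) \<Rightarrow> real"
  assumes n: "n \<ge> 1" and F: "finite F"
  shows "ennreal (\<Sum>x\<in>F. box_energy (block_corner n x) n f) \<le> ennreal (2 * real CARD('d)) * energy f"
proof -
  let ?U = "\<Union>(block n ` F)" and ?diff = "\<lambda>y i. (f (y(i := y i + 1)) - f y)\<^sup>2"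
  define \<phi> where "\<phi> p = ((fst p)(snd p := fst p (snd p) + 1), fst p)" for p :: "('d \<Rightarrow> int) \<times> 'd"
  have inj: "inj \<phi>"
  proof (rule injI)
    fix p q assume "\<phi> p = \<phi> q"
    then have "fst p = fst q" "(fst p)(snd p := fst p (snd p) + 1) = (fst p)(snd q := fst p (snd q) + 1)"
      by (auto simp: \<phi>_def)
    moreover from this(2) have "snd p = snd q"
      by (metis fun_upd_same fun_upd_other lessI less_irrefl zless_add1_eq)
    ultimately show "p = q"
      by (simp add: prod_eq_iff)
  qed
  have "(\<Sum>x\<in>F. box_energy (block_corner n x) n f) \<le> (\<Sum>x\<in>F. \<Sum>y\<in>block n x. \<Sum>i\<in>UNIV. ?diff y i)"
    unfolding box_energy_def block_eq_lattice_box box_grad_def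
    by (intro sum_mono) (simp add: sum.swap[of _ UNIV] sum_mono)
  also have "\<dots> = (\<Sum>(y, i)\<in>?U \<times> UNIV. ?diff y i)"
    unfolding sum_blocks_eq_sum_Union[OF n F] by (simp add: sum.cartesian_product)
  also have "\<dots> = (\<Sum>q\<in>\<phi> ` (?U \<times> UNIV). (f (fst q) - f (snd q))\<^sup>2)"
    by (subst sum.reindex[OF inj_on_subset[OF inj subset_UNIV]]) (simp add: \<phi>_def case_prod_unfold)
  finally have "ennreal (\<Sum>x\<in>F. box_energy (block_corner n x) n f)
      \<le> (\<Sum>q\<in>\<phi> ` (?U \<times> UNIV). ennreal ((f (fst q) - f (snd q))\<^sup>2))"
    by (simp add: ennreal_leI)
  also have "\<dots> \<le> (\<Sum>\<^sub>\<infinity>q\<in>{(y, z). lattice_nbr y z}. ennreal ((f (fst q) - f (snd q))\<^sup>2))"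
    using n F by (intro ennreal_sum_le_infsum) (auto simp: \<phi>_def finite_block lattice_nbr_fun_upd_Suc)
  also have "\<dots> = ennreal (2 * real CARD('d)) * energy f"
    by (simp add: energy_def ennreal_mult[symmetric] mult.assoc[symmetric])
  finally show ?thesis .
qed

lemma block_mass_le_sobolev:
  fixes f :: "('d::finite \<Rightarrow> int) \<Rightarrow> real"
  assumes n: "n \<ge> 1" and d: "CARD('d) \<ge> 3" and nonneg: "\<And>y. f y \<ge> 0"
    and small: "block_mass n f x \<le> T"
  shows "block_mass n f x \<le> T powr (1 - 2 / crit_exp CARD('d)) * (sobolev_const CARD('d)
           * ((\<Sum>y\<in>block n x. (f y)\<^sup>2) / (real n)\<^sup>2 + box_energy (block_corner n x) n f))"
proof -
  let ?p = "crit_exp CARD('d)"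
  have p: "0 \<le> 2 / ?p" "2 / ?p \<le> 1"
    using d by (auto simp: crit_exp_def divide_simps)
  have "block_mass n f x \<le> T powr (1 - 2 / ?p) * block_mass n f x powr (2 / ?p)"
    using small p by (intro le_powr_mult_powr) (auto simp: block_mass_def intro!: sum_nonneg)
  also have "\<dots> \<le> T powr (1 - 2 / ?p) * (sobolev_const CARD('d)
           * ((\<Sum>y\<in>block n x. (f y)\<^sup>2) / (real n)\<^sup>2 + box_energy (block_corner n x) n f))"
    using sobolev_box[where f = f and a = "block_corner n x", OF n d nonneg]
    by (intro mult_left_mono) (simp_all add: block_mass_def block_eq_lattice_box)
  finally show ?thesis .
qed

lemma sum_block_mass_outside_Xset_le:
  fixes f :: "('d::finite \<Rightarrow> int) \<Rightarrow> real"
  assumes n: "n \<ge> 1" and d: "CARD('d) \<ge> 3" and nonneg: "\<And>y. f y \<ge> 0"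
    and F: "F \<subseteq> UNIV - Xset n f \<delta>"
  shows "(\<Sum>x\<in>F. block_mass n f x)
         \<le> (\<delta> powr crit_exp CARD('d) * real n powr (real CARD('d) + crit_exp CARD('d)))
               powr (1 - 2 / crit_exp CARD('d)) * sobolev_const CARD('d)
           * (1 / (real n)\<^sup>2 * (\<Sum>x\<in>F. \<Sum>y\<in>block n x. (f y)\<^sup>2) + (\<Sum>x\<in>F. box_energy (block_corner n x) n f))"
  (is "_ \<le> ?T * ?K * _")
proof -
  have "(\<Sum>x\<in>F. block_mass n f x)
        \<le> (\<Sum>x\<in>F. ?T * (?K * ((\<Sum>y\<in>block n x. (f y)\<^sup>2) / (real n)\<^sup>2 + box_energy (block_corner n x) n f)))"
    using F by (intro sum_mono block_mass_le_sobolev[OF n d nonneg]) (auto simp: Xset_def)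
  moreover have "(\<Sum>x\<in>F. T * (K * (u x / c + v x))) = T * K * (1 / c * sum u F + sum v F)"
    for u v :: "('d \<Rightarrow> int) \<Rightarrow> real" and c T K :: real
    by (simp add: sum.distrib sum_distrib_left sum_divide_distrib algebra_simps)
  ultimately show ?thesis
    by simp
qed

lemma sum_block_mass_outside_le:
  fixes f :: "('d::finite \<Rightarrow> int) \<Rightarrow> real"
  assumes n: "n \<ge> 1" and d: "CARD('d) \<ge> 3" and nonneg: "\<And>y. f y \<ge> 0"
    and F: "finite F" "F \<subseteq> UNIV - Xset n f \<delta>"
  shows "(\<Sum>x\<in>F. ennreal (block_mass n f x))
         \<le> ennreal (2 * real CARD('d) * sobolev_const CARD('d)
               * (\<delta> powr crit_exp CARD('d) * real n powr (real CARD('d) + crit_exp CARD('d)))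
                   powr (1 - 2 / crit_exp CARD('d)))
           * (ennreal (1 / (real n)\<^sup>2) * l2sq f + energy f)"
proof -
  let ?D = "real CARD('d)" and ?p = "crit_exp CARD('d)"
  define T where "T = (\<delta> powr ?p * real n powr (?D + ?p)) powr (1 - 2 / ?p)"
  define K where "K = sobolev_const CARD('d)"
  define A where "A = (\<Sum>x\<in>F. \<Sum>y\<in>block n x. (f y)\<^sup>2)"
  define B where "B = (\<Sum>x\<in>F. box_energy (block_corner n x) n f)"
  have nonneg': "T \<ge> 0" "K \<ge> 0" "A \<ge> 0" "B \<ge> 0"
    using d by (auto simp: T_def K_def A_def B_def sobolev_const_def box_energy_nonneg intro!: sum_nonneg)
  have "(\<Sum>x\<in>F. block_mass n f x) \<le> T * K * (1 / (real n)\<^sup>2 * A + B)"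
    unfolding T_def K_def A_def B_def by (rule sum_block_mass_outside_Xset_le[OF n d nonneg F(2)])
  then have "(\<Sum>x\<in>F. ennreal (block_mass n f x)) \<le> ennreal (T * K * (1 / (real n)\<^sup>2 * A + B))"
    by (simp add: sum_ennreal block_mass_def sum_nonneg ennreal_leI)
  also have "\<dots> = ennreal (T * K) * (ennreal (1 / (real n)\<^sup>2) * ennreal A + ennreal B)"
    using nonneg' by (simp add: ennreal_mult ennreal_plus del: times_divide_eq_left divide_inverse)
  also have "\<dots> \<le> ennreal (T * K) * (ennreal (1 / (real n)\<^sup>2) * l2sq f + ennreal (2 * ?D) * energy f)"
    unfolding A_def B_def
    by (intro mult_left_mono add_mono sum_block_sq_le_l2sq[OF n F(1)] sum_block_energy_le_energy[OF n F(1)]) auto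
  also have "\<dots> \<le> ennreal (T * K) * (ennreal (2 * ?D) * (ennreal (1 / (real n)\<^sup>2) * l2sq f + energy f))"
  proof (intro mult_left_mono)
    have "1 \<le> ennreal (2 * ?D)"
      using d by simp
    then show "ennreal (1 / (real n)\<^sup>2) * l2sq f + ennreal (2 * ?D) * energy f
        \<le> ennreal (2 * ?D) * (ennreal (1 / (real n)\<^sup>2) * l2sq f + energy f)"
      using mult_right_mono[of 1 "ennreal (2 * ?D)" "ennreal (1 / (real n)\<^sup>2) * l2sq f"]
      by (simp add: distrib_left)
  qed simp
  also have "\<dots> = ennreal (2 * ?D * K * T) * (ennreal (1 / (real n)\<^sup>2) * l2sq f + energy f)"
  proof -
    have "ennreal (2 * ?D * K * T) = ennreal (T * K) * ennreal (2 * ?D)"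
      using nonneg' by (simp add: ennreal_mult[symmetric] mult_ac)
    then show ?thesis
      by (simp add: mult.assoc)
  qed
  finally show ?thesis
    unfolding T_def K_def .
qed

theorem lemma4p2:
  assumes "CARD('d::finite) \<ge> 3"
  shows "\<exists>c::real. \<forall>(n::nat) (\<delta>::real) (f::('d \<Rightarrow> int) \<Rightarrow> real).
           n \<ge> 1 \<longrightarrow> \<delta> > 0 \<longrightarrow> (\<forall>y. f y \<ge> 0) \<longrightarrow>
           (\<Sum>\<^sub>\<infinity>x\<in>UNIV - Xset n f \<delta>. ennreal (block_mass n f x))
             \<le> ennreal (c * (\<delta> powr crit_exp CARD('d) * real n powr (real CARD('d) + crit_exp CARD('d)))
                        powr (1 - 2 / crit_exp CARD('d)))
               * (ennreal (1 / (real n)\<^sup>2) * l2sq f + energy f)"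
proof (intro exI[of _ "2 * real CARD('d) * sobolev_const CARD('d)"] allI impI)
  fix n :: nat and \<delta> :: real and f :: "('d \<Rightarrow> int) \<Rightarrow> real"
  assume n: "n \<ge> 1" and "\<delta> > 0" and nonneg: "\<forall>y. f y \<ge> 0"
  show "(\<Sum>\<^sub>\<infinity>x\<in>UNIV - Xset n f \<delta>. ennreal (block_mass n f x))
        \<le> ennreal (2 * real CARD('d) * sobolev_const CARD('d)
              * (\<delta> powr crit_exp CARD('d) * real n powr (real CARD('d) + crit_exp CARD('d)))
                  powr (1 - 2 / crit_exp CARD('d)))
          * (ennreal (1 / (real n)\<^sup>2) * l2sq f + energy f)"
    using sum_block_mass_outside_le[OF n assms] nonneg
    by (intro infsum_le_finite_sums nonneg_summable_on_complete) auto
qed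

end
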